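(* Let $\tau$ be a normalized POV measure on $\mathcal M$ (so $\tau(\mathcal M)=1$) which is covariant under space-time translations, i.e. $\exp(-ix_\alpha P^\alpha)\,\tau(I+x)\,\exp(ix_\alpha P^\alpha)=\tau(I)$ for every Borel set $I\subset\mathcal M$ and every $x\in\mathcal M$. Then for every nonzero $\psi\in\mathcal H$ and every non-empty open set $I\subset\mathcal M$, $$(\psi,\tau(I)\psi)>0 .$$
   Context: $\mathcal M=\mathbb R^4$ is Minkowski space-time with metric $g=\mathrm{diag}(1,-1,-1,-1)$, and $x_\alpha k^\alpha=g_{\alpha\beta}x^\alpha k^\beta$. $\mathcal H$ is a separable complex Hilbert space on which $P^0,\dots,P^3$ are commuting self-adjoint operators (the four-momentum), generating the unitary translation group $x\mapsto\exp(ix_\alpha P^\alpha)$, whose joint spectrum is contained in the closed future cone $\{k: k_\alpha k^\alpha\ge 0,\ k^0\ge 0\}$. A POV (positive operator valued) measure $\tau$ on $\mathcal M$ assigns to each Borel set $I\subset\mathcal M$ a bounded positive operator $\tau(I)$ on $\mathcal H$, countably additive in the weak operator topology; it is normalized if $\tau(\mathcal M)=1$. *)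

theory Defs
  imports "HOL-Analysis.Analysis" "HOL-Library.Complex_Order"
begin

type_synonym spacetime = "real ^ 4"

definition mink :: "spacetime \<Rightarrow> spacetime \<Rightarrow> real" where
  "mink x k = x $ 0 * k $ 0 - x $ 1 * k $ 1 - x $ 2 * k $ 2 - x $ 3 * k $ 3"

definition future_cone :: "spacetime set" where
  "future_cone = {k. mink k k \<ge> 0 \<and> k $ 0 \<ge> 0}"

text \<open>A separable complex Hilbert space, modelled (up to unitary equivalence) as
  l^2 over a countable index type 'i.  Vectors are functions 'i => complex that are
  square summable; operators are functions on such vectors (only their values on l2 matter).\<close>

definition l2 :: "('i::countable \<Rightarrow> complex) set" where
  "l2 = {\<psi>. (\<lambda>i. (cmod (\<psi> i))\<^sup>2) summable_on UNIV}"

definition l2_inner :: "('i::countable \<Rightarrow> complex) \<Rightarrow> ('i \<Rightarrow> complex) \<Rightarrow> complex" where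
  "l2_inner \<phi> \<psi> = (\<Sum>\<^sub>\<infinity>i. cnj (\<phi> i) * \<psi> i)"

definition l2_norm :: "('i::countable \<Rightarrow> complex) \<Rightarrow> real" where
  "l2_norm \<psi> = sqrt (\<Sum>\<^sub>\<infinity>i. (cmod (\<psi> i))\<^sup>2)"

type_synonym 'i op = "('i \<Rightarrow> complex) \<Rightarrow> ('i \<Rightarrow> complex)"

definition bounded_op :: "'i::countable op \<Rightarrow> bool" where
  "bounded_op A \<longleftrightarrow>
     (\<forall>\<psi>\<in>l2. A \<psi> \<in> l2) \<and>
     (\<forall>\<phi>\<in>l2. \<forall>\<psi>\<in>l2. \<forall>a b. A (\<lambda>i. a * \<phi> i + b * \<psi> i) = (\<lambda>i. a * A \<phi> i + b * A \<psi> i)) \<and>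
     (\<exists>C. \<forall>\<psi>\<in>l2. l2_norm (A \<psi>) \<le> C * l2_norm \<psi>)"

definition positive_op :: "'i::countable op \<Rightarrow> bool" where
  "positive_op A \<longleftrightarrow> bounded_op A \<and> (\<forall>\<psi>\<in>l2. l2_inner \<psi> (A \<psi>) \<ge> 0)"

definition weakly_countably_additive :: "(spacetime set \<Rightarrow> 'i::countable op) \<Rightarrow> bool" where
  "weakly_countably_additive T \<longleftrightarrow>
     (\<forall>I :: nat \<Rightarrow> spacetime set. (\<forall>n. I n \<in> sets borel) \<longrightarrow> disjoint_family I \<longrightarrow>
        (\<forall>\<phi>\<in>l2. \<forall>\<psi>\<in>l2. (\<lambda>n. l2_inner \<phi> (T (I n) \<psi>)) sums l2_inner \<phi> (T (\<Union>n. I n) \<psi>)))"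

definition POV_measure :: "(spacetime set \<Rightarrow> 'i::countable op) \<Rightarrow> bool" where
  "POV_measure \<tau> \<longleftrightarrow> (\<forall>I\<in>sets borel. positive_op (\<tau> I)) \<and> weakly_countably_additive \<tau>"

definition normalized :: "(spacetime set \<Rightarrow> 'i::countable op) \<Rightarrow> bool" where
  "normalized \<tau> \<longleftrightarrow> (\<forall>\<psi>\<in>l2. \<tau> UNIV \<psi> = \<psi>)"

definition PV_measure :: "(spacetime set \<Rightarrow> 'i::countable op) \<Rightarrow> bool" where
  "PV_measure E \<longleftrightarrow>
     (\<forall>I\<in>sets borel. bounded_op (E I) \<and>
        (\<forall>\<psi>\<in>l2. E I (E I \<psi>) = E I \<psi>) \<and>
        (\<forall>\<phi>\<in>l2. \<forall>\<psi>\<in>l2. l2_inner \<phi> (E I \<psi>) = l2_inner (E I \<phi>) \<psi>)) \<and>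
     (\<forall>\<psi>\<in>l2. E UNIV \<psi> = \<psi>) \<and>
     weakly_countably_additive E"

definition spectral_measure :: "(spacetime set \<Rightarrow> 'i::countable op) \<Rightarrow> ('i \<Rightarrow> complex) \<Rightarrow> spacetime measure" where
  "spectral_measure E \<psi> = measure_of UNIV (sets borel) (\<lambda>B. ennreal (Re (l2_inner \<psi> (E B \<psi>))))"

text \<open>The four-momentum P^0..P^3: commuting self-adjoint operators, given through their
  joint spectral measure E (P^a = integral of k^a dE(k)), with joint spectrum contained in
  the closed future cone, generating the translations U x = exp(i x_a P^a)
  = integral of exp(i x_a k^a) dE(k).  Since H is complex, U x is determined by its
  diagonal matrix elements.\<close>
definition four_momentum_translations :: "(spacetime set \<Rightarrow> 'i::countable op) \<Rightarrow> (spacetime \<Rightarrow> 'i op) \<Rightarrow> bool" where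
  "four_momentum_translations E U \<longleftrightarrow>
     PV_measure E \<and>
     (\<forall>\<psi>\<in>l2. E future_cone \<psi> = \<psi>) \<and>
     (\<forall>x. bounded_op (U x) \<and>
        (\<forall>\<psi>\<in>l2. l2_inner \<psi> (U x \<psi>) =
            (\<integral>k. cis (mink x k) \<partial>spectral_measure E \<psi>)))"

end

theory Submission
  imports Defs "HOL-Complex_Analysis.Complex_Analysis"
begin

text \<open>Suppose \<open>(\<psi>, \<tau>(I) \<psi>) = 0\<close> for an open \<open>I\<close> containing a ball \<open>B\<close> together with its small
  translates. Covariance turns \<open>(\<psi>, \<tau>(B + x) \<psi>)\<close> into \<open>(U(-x) \<psi>, \<tau>(B) U(-x) \<psi>)\<close>, and positivity
  of \<open>\<tau>(B)\<close> then makes \<open>y \<mapsto> (\<tau>(B) \<phi>, U(y) \<psi>)\<close> vanish near \<open>0\<close>, for every \<open>\<phi>\<close>. By polarization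
  this function is a combination of Fourier transforms of finite measures carried by the future
  cone, so along any direction \<open>e\<close> of the dual cone it extends holomorphically to the upper half
  plane in \<open>t\<close> (where \<open>y = y\<^sub>0 + t e\<close>); by Schwarz reflection and the identity theorem it vanishes
  on whole lines, and since such directions span \<open>\<real>\<^sup>4\<close>, everywhere. Hence \<open>(\<psi>, \<tau>(B + x) \<psi>) = 0\<close>
  for all \<open>x\<close>; countably many translates of \<open>B\<close> cover \<open>\<real>\<^sup>4\<close>, so \<open>(\<psi>, \<psi>) = (\<psi>, \<tau>(\<real>\<^sup>4) \<psi>) = 0\<close>.\<close>

no_notation fps_nth (infixl \<open>$\<close> 75)

section \<open>Holomorphic Fourier--Laplace transforms\<close>

lemma norm_exp_minus_one_minus_le:
  fixes z :: complex
  shows "norm (exp z - 1 - z) \<le> norm z ^ 2 * exp (norm z)"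
proof -
  have "(\<lambda>k. z ^ (k + 2) /\<^sub>R fact (k + 2)) sums (exp z - (\<Sum>k<2. z ^ k /\<^sub>R fact k))"
    by (intro sums_split_initial_segment exp_converges)
  then have tail: "exp z - 1 - z = (\<Sum>k. z ^ (k + 2) /\<^sub>R fact (k + 2))"
    by (simp add: sums_iff eval_nat_numeral)
  have summable: "summable (\<lambda>k. norm (z ^ (k + 2) /\<^sub>R fact (k + 2)))"
    using summable_norm_exp[of z]
    by (intro summable_norm summable_ignore_initial_segment) (auto simp: norm_power)
  have majorant: "(\<lambda>k. norm z ^ 2 * (norm z ^ k /\<^sub>R fact k)) sums (norm z ^ 2 * exp (norm z))"
    by (intro sums_mult exp_converges)
  have "norm (exp z - 1 - z) \<le> (\<Sum>k. norm (z ^ (k + 2) /\<^sub>R fact (k + 2)))"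
    unfolding tail by (rule summable_norm[OF summable])
  also have "\<dots> \<le> norm z ^ 2 * exp (norm z)"
  proof (rule sums_le[OF _ summable_sums[OF summable] majorant])
    fix k
    have "fact k \<le> (fact (k + 2) :: real)"
      by (intro fact_mono) auto
    then have "norm z ^ (k + 2) / fact (k + 2) \<le> norm z ^ (k + 2) / (fact k :: real)"
      by (intro divide_left_mono) auto
    moreover have "norm (z ^ (k + 2) /\<^sub>R fact (k + 2)) = norm z ^ (k + 2) / fact (k + 2)"
      by (simp add: norm_power divide_inverse_commute del: of_nat_Suc of_nat_add fact_Suc power_Suc)
    moreover have "norm z ^ 2 * (norm z ^ k /\<^sub>R fact k) = norm z ^ (k + 2) / fact k"
      by (simp add: power_add power2_eq_square field_simps)
    ultimately show "norm (z ^ (k + 2) /\<^sub>R fact (k + 2)) \<le> norm z ^ 2 * (norm z ^ k /\<^sub>R fact k)"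
      by simp
  qed
  finally show ?thesis .
qed

lemma power2_mult_exp_neg_le:
  fixes a l :: real
  assumes "0 < a" "0 \<le> l"
  shows "l ^ 2 * exp (- (a * l)) \<le> 2 / a ^ 2"
proof -
  have "1 + a * l + (a * l) ^ 2 / 2 \<le> exp (a * l)"
    using assms by (intro exp_lower_Taylor_quadratic) simp
  then have "(a * l) ^ 2 / 2 \<le> exp (a * l)"
    using assms by (smt (verit) mult_nonneg_nonneg)
  then show ?thesis
    using assms by (simp add: exp_minus field_simps power_mult_distrib)
qed

lemma mult_exp_neg_le:
  fixes a l :: real
  assumes "0 < a"
  shows "l * exp (- (a * l)) \<le> 1 / a"
proof -
  have "a * l \<le> exp (a * l)"
    using exp_ge_add_one_self[of "a * l"] by linarith
  then show ?thesis
    using assms by (simp add: exp_minus field_simps)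
qed

text \<open>The bound is uniform in \<open>l \<ge> 0\<close>: the quadratic growth in \<open>l\<close> is absorbed by the decay
  \<open>exp (- Im z * l / 2)\<close>.\<close>
lemma exp_i_mult_remainder_le:
  fixes z h :: complex and l :: real
  assumes z: "0 < Im z" and h: "norm h \<le> Im z / 2" and l: "0 \<le> l"
  shows "norm (exp (\<i> * (z + h) * l) - exp (\<i> * z * l) - h * (\<i> * l * exp (\<i> * z * l)))
           \<le> norm h ^ 2 * (8 / Im z ^ 2)"
proof -
  define w where "w = \<i> * h * l"
  have "exp (\<i> * (z + h) * l) - exp (\<i> * z * l) - h * (\<i> * l * exp (\<i> * z * l))
        = exp (\<i> * z * l) * (exp w - 1 - w)"
    by (simp add: w_def algebra_simps exp_add[symmetric])
  also have "norm \<dots> = exp (- (Im z * l)) * norm (exp w - 1 - w)"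
    by (simp add: norm_mult norm_exp_eq_Re)
  also have "\<dots> \<le> exp (- (Im z * l)) * ((norm h * l) ^ 2 * exp (norm h * l))"
    using norm_exp_minus_one_minus_le[of w] l by (simp add: w_def norm_mult)
  also have "\<dots> = norm h ^ 2 * (l ^ 2 * exp (norm h * l - Im z * l))"
    by (simp add: power_mult_distrib exp_diff exp_minus field_simps)
  also have "\<dots> \<le> norm h ^ 2 * (l ^ 2 * exp (- ((Im z / 2) * l)))"
    using mult_right_mono[OF h l] by (intro mult_left_mono) auto
  also have "\<dots> \<le> norm h ^ 2 * (2 / (Im z / 2) ^ 2)"
    using z l by (intro mult_left_mono power2_mult_exp_neg_le) auto
  finally show ?thesis
    by (simp add: power_divide)
qed

lemma has_field_derivative_if_quadratic_remainder:
  fixes f :: "'a::real_normed_field \<Rightarrow> 'a"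
  assumes "0 < \<delta>"
    and remainder: "\<And>w. norm (w - z) < \<delta> \<Longrightarrow> norm (f w - f z - (w - z) * D) \<le> C * norm (w - z) ^ 2"
  shows "(f has_field_derivative D) (at z)"
proof -
  have "((\<lambda>w. (f w - f z) / (w - z) - D) \<longlongrightarrow> 0) (at z)"
  proof (rule Lim_null_comparison)
    have "\<forall>\<^sub>F w in at z. w \<noteq> z \<and> dist w z < \<delta>"
      using assms(1) by (auto simp: eventually_at_filter eventually_nhds_metric)
    then show "\<forall>\<^sub>F w in at z. norm ((f w - f z) / (w - z) - D) \<le> C * norm (w - z)"
    proof eventually_elim
      case (elim w)
      then have "w - z \<noteq> 0" "norm (w - z) < \<delta>"
        by (auto simp: dist_norm)
      then have "norm (f w - f z - (w - z) * D) / norm (w - z) \<le> C * norm (w - z) ^ 2 / norm (w - z)"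
        using remainder by (intro divide_right_mono) auto
      moreover have "(f w - f z) / (w - z) - D = (f w - f z - (w - z) * D) / (w - z)"
        using \<open>w - z \<noteq> 0\<close> by (simp add: field_simps)
      ultimately show ?case
        using \<open>w - z \<noteq> 0\<close> by (simp add: norm_divide power2_eq_square)
    qed
    show "((\<lambda>w. C * norm (w - z)) \<longlongrightarrow> 0) (at z)"
      by (rule tendsto_eq_intros | simp)+
  qed
  then show ?thesis
    using Lim_null has_field_derivative_iff by blast
qed

definition fourier_laplace :: "'a measure \<Rightarrow> ('a \<Rightarrow> complex) \<Rightarrow> ('a \<Rightarrow> real) \<Rightarrow> complex \<Rightarrow> complex" where
  "fourier_laplace M g lam z = (\<integral>k. g k * exp (\<i> * z * lam k) \<partial>M)"

lemma norm_exp_i_mult_le_1: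
  "0 \<le> Im z \<Longrightarrow> 0 \<le> l \<Longrightarrow> norm (exp (\<i> * z * complex_of_real l)) \<le> 1"
  by (simp add: norm_exp_eq_Re mult_nonneg_nonneg)

lemma borel_measurable_exp_i_mult:
  "lam \<in> borel_measurable M \<Longrightarrow> (\<lambda>k. exp (\<i> * z * complex_of_real (lam k))) \<in> borel_measurable M"
  by (rule measurable_compose[OF _ borel_measurable_continuous_onI[of "\<lambda>t. exp (\<i> * z * complex_of_real t)"]])
     (auto intro!: continuous_intros)

lemma integral_norm_le_const:
  fixes f :: "'a \<Rightarrow> 'b::{banach,second_countable_topology}"
  assumes "finite_measure M" "integrable M f" "AE k in M. norm (f k) \<le> C"
  shows "norm (integral\<^sup>L M f) \<le> C * measure M (space M)"
proof -
  have "norm (integral\<^sup>L M f) \<le> (\<integral>k. norm (f k) \<partial>M)"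
    by (rule integral_norm_bound)
  also have "\<dots> \<le> (\<integral>k. C \<partial>M)"
    using assms by (intro integral_mono_AE finite_measure.integrable_const) auto
  finally show ?thesis
    by (simp add: mult.commute)
qed

context
  fixes M :: "'a measure" and g :: "'a \<Rightarrow> complex" and lam :: "'a \<Rightarrow> real" and B :: real
  assumes finite: "finite_measure M"
    and g_measurable: "g \<in> borel_measurable M"
    and g_bounded: "AE k in M. norm (g k) \<le> B"
    and lam_measurable: "lam \<in> borel_measurable M"
    and lam_nonneg: "AE k in M. 0 \<le> lam k"
begin

lemma fourier_laplace_integrand_bounded:
  assumes "0 \<le> Im z"
  shows "AE k in M. norm (g k * exp (\<i> * z * lam k)) \<le> B"
  using g_bounded lam_nonneg
proof eventually_elim
  case (elim k)
  then have "norm (g k) * norm (exp (\<i> * z * lam k)) \<le> B * 1"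
    using norm_exp_i_mult_le_1[OF assms] order_trans[OF norm_ge_zero]
    by (intro mult_mono) auto
  then show ?case
    by (simp add: norm_mult)
qed

lemma integrable_fourier_laplace_integrand:
  "0 \<le> Im z \<Longrightarrow> integrable M (\<lambda>k. g k * exp (\<i> * z * lam k))"
  by (intro finite_measure.integrable_const_bound[OF finite, where B=B] fourier_laplace_integrand_bounded
        borel_measurable_times g_measurable borel_measurable_exp_i_mult lam_measurable)

lemma integrable_fourier_laplace_derivative_integrand:
  assumes "0 < Im z"
  shows "integrable M (\<lambda>k. \<i> * lam k * g k * exp (\<i> * z * lam k))"
proof (rule finite_measure.integrable_const_bound[OF finite, where B="B / Im z"])
  show "AE k in M. norm (\<i> * lam k * g k * exp (\<i> * z * lam k)) \<le> B / Im z"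
    using g_bounded lam_nonneg
  proof eventually_elim
    case (elim k)
    have "norm (\<i> * lam k * g k * exp (\<i> * z * lam k)) = norm (g k) * (lam k * exp (- (Im z * lam k)))"
      using elim by (simp add: norm_mult norm_exp_eq_Re)
    also have "\<dots> \<le> B * (1 / Im z)"
      using elim assms order_trans[OF norm_ge_zero] by (intro mult_mono mult_exp_neg_le) auto
    finally show ?case
      by simp
  qed
  show "(\<lambda>k. \<i> * lam k * g k * exp (\<i> * z * lam k)) \<in> borel_measurable M"
    using g_measurable lam_measurable borel_measurable_exp_i_mult[OF lam_measurable] by measurable
qed

lemma fourier_laplace_remainder_le:
  assumes z: "0 < Im z" and wz: "norm (w - z) < Im z / 2"
  shows "norm (fourier_laplace M g lam w - fourier_laplace M g lam z
               - (w - z) * fourier_laplace M (\<lambda>k. \<i> * lam k * g k) lam z)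
         \<le> B * measure M (space M) * (8 / Im z ^ 2) * norm (w - z) ^ 2"
proof -
  have "\<bar>Im w - Im z\<bar> \<le> norm (w - z)"
    using abs_Im_le_cmod[of "w - z"] by simp
  then have "0 \<le> Im w"
    using wz z by linarith
  define R where "R k = g k * (exp (\<i> * (z + (w - z)) * lam k) - exp (\<i> * z * lam k)
                           - (w - z) * (\<i> * lam k * exp (\<i> * z * lam k)))" for k
  have R_eq: "R = (\<lambda>k. g k * exp (\<i> * w * lam k) - g k * exp (\<i> * z * lam k)
                      - (w - z) * (\<i> * lam k * g k * exp (\<i> * z * lam k)))"
    by (auto simp: R_def algebra_simps)
  have integrable: "integrable M R"
    unfolding R_eq using \<open>0 \<le> Im w\<close> z
    by (intro Bochner_Integration.integrable_diff Bochner_Integration.integrable_mult_right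
        integrable_fourier_laplace_integrand integrable_fourier_laplace_derivative_integrand) auto
  have "fourier_laplace M g lam w - fourier_laplace M g lam z
          - (w - z) * fourier_laplace M (\<lambda>k. \<i> * lam k * g k) lam z = integral\<^sup>L M R"
    unfolding R_eq fourier_laplace_def using \<open>0 \<le> Im w\<close> z
    by (subst Bochner_Integration.integral_diff Bochner_Integration.integral_mult_right_zero
        | intro Bochner_Integration.integrable_diff Bochner_Integration.integrable_mult_right
          integrable_fourier_laplace_integrand integrable_fourier_laplace_derivative_integrand
        | simp)+
  also have "norm \<dots> \<le> (B * (norm (w - z) ^ 2 * (8 / Im z ^ 2))) * measure M (space M)"
  proof (rule integral_norm_le_const[OF finite integrable])
    show "AE k in M. norm (R k) \<le> B * (norm (w - z) ^ 2 * (8 / Im z ^ 2))"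
      using g_bounded lam_nonneg
    proof eventually_elim
      case (elim k)
      then show ?case
        unfolding R_def norm_mult using wz z order_trans[OF norm_ge_zero]
        by (intro mult_mono exp_i_mult_remainder_le) auto
    qed
  qed
  finally show ?thesis
    by (simp add: algebra_simps)
qed

lemma holomorphic_on_fourier_laplace:
  "fourier_laplace M g lam holomorphic_on {z. 0 < Im z}"
proof -
  have "(fourier_laplace M g lam has_field_derivative fourier_laplace M (\<lambda>k. \<i> * lam k * g k) lam z)
          (at z)" if "0 < Im z" for z
    using that fourier_laplace_remainder_le[OF that]
    by (intro has_field_derivative_if_quadratic_remainder[of "Im z / 2" _ _ _
          "B * measure M (space M) * (8 / Im z ^ 2)"]) auto
  then show ?thesis
    using holomorphic_on_open open_halfspace_Im_gt by blast
qed

lemma continuous_on_fourier_laplace: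
  "continuous_on {z. 0 \<le> Im z} (fourier_laplace M g lam)"
proof (rule continuous_on_sequentiallyI)
  fix u :: "nat \<Rightarrow> complex" and a
  assume u: "\<forall>n. u n \<in> {z. 0 \<le> Im z}" and "u \<longlonglongrightarrow> a"
  show "(\<lambda>n. fourier_laplace M g lam (u n)) \<longlonglongrightarrow> fourier_laplace M g lam a"
    unfolding fourier_laplace_def
  proof (rule integral_dominated_convergence[where w="\<lambda>_. B"])
    show "AE k in M. (\<lambda>n. g k * exp (\<i> * u n * lam k)) \<longlonglongrightarrow> g k * exp (\<i> * a * lam k)"
      using \<open>u \<longlonglongrightarrow> a\<close> by (intro AE_I2 tendsto_intros)
    show "AE k in M. norm (g k * exp (\<i> * u n * lam k)) \<le> B" for n
      using u by (intro fourier_laplace_integrand_bounded) auto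
  qed (use finite in \<open>auto intro!: borel_measurable_times g_measurable borel_measurable_exp_i_mult
         lam_measurable finite_measure.integrable_const\<close>)
qed

end

section \<open>Vanishing on a real interval\<close>

text \<open>Reflecting \<open>F\<close> across the interval gives a function holomorphic on the whole disc.\<close>
lemma zero_on_upper_half_disc_if_zero_on_real_interval:
  fixes F :: "complex \<Rightarrow> complex"
  assumes holo: "F holomorphic_on {z. 0 < Im z}" and cont: "continuous_on {z. 0 \<le> Im z} F"
    and "0 < d" and zero: "\<And>t. \<bar>t\<bar> < d \<Longrightarrow> F (of_real t) = 0"
    and w: "w \<in> ball 0 d" "0 \<le> Im w"
  shows "F w = 0"
proof -
  define H where "H z = (if 0 \<le> Im z then F z else cnj (F (cnj z)))" for z
  have H_holo: "H holomorphic_on ball 0 d"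
    unfolding H_def
  proof (rule Schwarz_reflection)
    show "F holomorphic_on ball 0 d \<inter> {z. 0 < Im z}"
      by (rule holomorphic_on_subset[OF holo]) auto
    show "continuous_on (ball 0 d \<inter> {z. 0 \<le> Im z}) F"
      by (rule continuous_on_subset[OF cont]) auto
    show "F z \<in> \<real>" if "z \<in> ball 0 d" "z \<in> \<real>" for z
      using that zero by (auto elim!: Reals_cases)
  qed auto
  have limpt: "0 islimpt complex_of_real ` {0<..<d}"
  proof (rule islimpt_approachable[THEN iffD2], intro allI impI)
    fix e :: real
    assume "0 < e"
    then show "\<exists>x\<in>complex_of_real ` {0<..<d}. x \<noteq> 0 \<and> dist x 0 < e"
      using \<open>0 < d\<close>
      by (intro bexI[of _ "of_real (min e d / 2)"] image_eqI[where x="min e d / 2"]) auto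
  qed
  have "H w = 0"
  proof (rule analytic_continuation[OF H_holo _ _ _ _ limpt])
    show "H z = 0" if "z \<in> complex_of_real ` {0<..<d}" for z
      using that zero by (auto simp: H_def)
  qed (use \<open>0 < d\<close> w in auto)
  then show ?thesis
    using w by (simp add: H_def)
qed

lemma zero_on_upper_half_plane_if_zero_on_real_interval:
  fixes F :: "complex \<Rightarrow> complex"
  assumes holo: "F holomorphic_on {z. 0 < Im z}" and cont: "continuous_on {z. 0 \<le> Im z} F"
    and "0 < d" and zero: "\<And>t. \<bar>t\<bar> < d \<Longrightarrow> F (of_real t) = 0"
    and "0 < Im w"
  shows "F w = 0"
proof -
  define c where "c = \<i> * of_real (d / 2)"
  have half_disc: "ball c (d / 2) \<subseteq> ball 0 d \<inter> {z. 0 < Im z}"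
  proof
    fix z
    assume z: "z \<in> ball c (d / 2)"
    have "norm c = d / 2" "Im c = d / 2"
      using \<open>0 < d\<close> by (auto simp: c_def norm_mult)
    moreover have "norm z \<le> norm c + norm (z - c)" "\<bar>Im z - Im c\<bar> \<le> norm (z - c)"
      using norm_triangle_ineq[of c "z - c"] abs_Im_le_cmod[of "z - c"] by auto
    ultimately show "z \<in> ball 0 d \<inter> {z. 0 < Im z}"
      using z by (auto simp: dist_norm norm_minus_commute)
  qed
  show ?thesis
  proof (rule analytic_continuation[OF holo open_halfspace_Im_gt connected_halfspace_Im_gt])
    show "ball c (d / 2) \<subseteq> {z. 0 < Im z}"
      using half_disc by auto
    show "c islimpt ball c (d / 2)" "c \<in> {z. 0 < Im z}" "w \<in> {z. 0 < Im z}"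
      using \<open>0 < d\<close> \<open>0 < Im w\<close> by (auto simp: c_def islimpt_ball)
    show "F z = 0" if "z \<in> ball c (d / 2)" for z
      using that half_disc
      by (intro zero_on_upper_half_disc_if_zero_on_real_interval[OF holo cont \<open>0 < d\<close> zero]) auto
  qed
qed

lemma zero_on_closed_upper_half_plane_if_zero_on_real_interval:
  fixes F :: "complex \<Rightarrow> complex"
  assumes holo: "F holomorphic_on {z. 0 < Im z}" and cont: "continuous_on {z. 0 \<le> Im z} F"
    and "0 < d" and zero: "\<And>t. \<bar>t\<bar> < d \<Longrightarrow> F (of_real t) = 0"
    and "0 \<le> Im w"
  shows "F w = 0"
proof -
  define u where "u n = w + \<i> * of_real (1 / (real n + 1))" for n
  have "u \<longlonglongrightarrow> w + \<i> * of_real 0"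
    unfolding u_def using LIMSEQ_inverse_real_of_nat
    by (intro tendsto_intros) (simp add: inverse_eq_divide add.commute)
  then have "(F \<circ> u) \<longlonglongrightarrow> F w"
    using cont \<open>0 \<le> Im w\<close> unfolding continuous_on_sequentially by (auto simp: u_def)
  moreover have "F \<circ> u = (\<lambda>_. 0)"
    using \<open>0 \<le> Im w\<close>
    by (simp add: fun_eq_iff u_def add_nonneg_pos
        zero_on_upper_half_plane_if_zero_on_real_interval[OF holo cont \<open>0 < d\<close> zero])
  ultimately show ?thesis
    using LIMSEQ_unique[OF _ tendsto_const] by simp
qed

section \<open>Fourier transforms of measures carried by the future cone\<close>

lemma mink_add_scaleR: "mink (x + t *\<^sub>R e) k = mink x k + t * mink e k"
  by (simp add: mink_def algebra_simps)

lemma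
  assumes "sets M = sets borel"
  shows borel_measurable_mink: "mink x \<in> borel_measurable M"
    and borel_measurable_cis_mink: "(\<lambda>k. cis (mink x k)) \<in> borel_measurable M"
proof -
  have "(\<lambda>k. mink x k) \<in> borel_measurable borel"
    unfolding mink_def by (intro borel_measurable_continuous_onI continuous_intros)
  moreover have "(\<lambda>k. cis (mink x k)) \<in> borel_measurable borel"
    unfolding mink_def by (intro borel_measurable_continuous_onI continuous_intros)
  ultimately show "mink x \<in> borel_measurable M" "(\<lambda>k. cis (mink x k)) \<in> borel_measurable M"
    by (simp_all add: measurable_cong_sets[OF assms refl])
qed

lemma four_eq_zero: "(4::4) = 0"
  by simp

lemma abs_component_le_time_component:
  assumes "k \<in> future_cone"
  shows "\<bar>k $ j\<bar> \<le> k $ 0"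
proof -
  have "0 \<le> k $ 0" and "0 \<le> k$0 * k$0 - k$1 * k$1 - k$2 * k$2 - k$3 * k$3"
    using assms by (auto simp: future_cone_def mink_def)
  moreover have "0 \<le> k$1 * k$1" "0 \<le> k$2 * k$2" "0 \<le> k$3 * k$3"
    by auto
  ultimately have "\<forall>j. k $ j * k $ j \<le> k $ 0 * k $ 0"
    unfolding forall_4 four_eq_zero by linarith
  then have "\<bar>k $ j\<bar> ^ 2 \<le> (k $ 0) ^ 2"
    by (simp add: power2_eq_square)
  then show ?thesis
    using \<open>0 \<le> k $ 0\<close> by (rule power2_le_imp_le)
qed

text \<open>Four linearly independent vectors in the dual of the future cone; they span \<open>\<real>\<^sup>4\<close>, so
  every point is reached from the origin along four such directions.\<close>
definition cone_direction :: "4 \<Rightarrow> spacetime" where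
  "cone_direction j = (\<chi> i. if i = 0 then 1 else if i = j then 1 / 2 else 0)"

lemma mink_cone_direction: "mink (cone_direction j) k = k $ 0 - (if j = 0 then 0 else k $ j / 2)"
proof -
  have "j = 0 \<or> j = 1 \<or> j = 2 \<or> j = 3"
    using exhaust_4[of j] by auto
  then show ?thesis
    by (elim disjE) (simp_all add: mink_def cone_direction_def)
qed

lemma mink_cone_direction_nonneg:
  assumes "k \<in> future_cone"
  shows "0 \<le> mink (cone_direction j) k"
  using abs_component_le_time_component[OF assms, of j] abs_component_le_time_component[OF assms, of 0]
  unfolding mink_cone_direction by auto

lemma cone_direction_decomposition:
  "x = (x$0 - 2 * x$1 - 2 * x$2 - 2 * x$3) *\<^sub>R cone_direction 0 + (2 * x$1) *\<^sub>R cone_direction 1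
       + (2 * x$2) *\<^sub>R cone_direction 2 + (2 * x$3) *\<^sub>R cone_direction 3"
  unfolding vec_eq_iff forall_4 four_eq_zero by (simp add: cone_direction_def)

definition fourier_combination ::
    "nat \<Rightarrow> (nat \<Rightarrow> complex) \<Rightarrow> (nat \<Rightarrow> spacetime measure) \<Rightarrow> spacetime \<Rightarrow> complex" where
  "fourier_combination n c M y = (\<Sum>j<n. c j * (\<integral>k. cis (mink y k) \<partial>M j))"

lemma fourier_laplace_cis_mink_of_real:
  "fourier_laplace M (\<lambda>k. cis (mink x k)) (mink e) (of_real s) = (\<integral>k. cis (mink (x + s *\<^sub>R e) k) \<partial>M)"
proof -
  have "cis (mink x k) * exp (\<i> * of_real s * of_real (mink e k)) = cis (mink x k + s * mink e k)" for k
    by (simp add: cis_mult[symmetric] cis_conv_exp distrib_left exp_add mult.assoc)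
  then show ?thesis
    by (simp add: fourier_laplace_def mink_add_scaleR)
qed

text \<open>The spectrum condition enters here: as the measures live on the future cone and \<open>e\<close> lies in its
  dual, the exponentials \<open>exp (\<i> \<zeta> mink e k)\<close> stay bounded for \<open>Im \<zeta> \<ge> 0\<close>.\<close>
lemma fourier_combination_holomorphic_extension:
  assumes finite: "\<And>j. j < n \<Longrightarrow> finite_measure (M j)"
    and sets: "\<And>j. j < n \<Longrightarrow> sets (M j) = sets borel"
    and cone: "\<And>j. j < n \<Longrightarrow> AE k in M j. k \<in> future_cone"
    and e: "\<And>k. k \<in> future_cone \<Longrightarrow> 0 \<le> mink e k"
  shows "\<exists>F. F holomorphic_on {z. 0 < Im z} \<and> continuous_on {z. 0 \<le> Im z} F \<and>
           (\<forall>s. F (of_real s) = fourier_combination n c M (x + s *\<^sub>R e))"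
proof (intro exI conjI allI)
  define F where "F \<zeta> = (\<Sum>j<n. c j * fourier_laplace (M j) (\<lambda>k. cis (mink x k)) (mink e) \<zeta>)" for \<zeta>
  show "F (of_real s) = fourier_combination n c M (x + s *\<^sub>R e)" for s
    by (simp add: F_def fourier_combination_def fourier_laplace_cis_mink_of_real)
  have conditions: "finite_measure (M j)" "(\<lambda>k. cis (mink x k)) \<in> borel_measurable (M j)"
    "AE k in M j. norm (cis (mink x k)) \<le> 1" "mink e \<in> borel_measurable (M j)"
    "AE k in M j. 0 \<le> mink e k" if "j < n" for j
  proof -
    show "finite_measure (M j)" "mink e \<in> borel_measurable (M j)"
      "(\<lambda>k. cis (mink x k)) \<in> borel_measurable (M j)"
      using finite[OF that] borel_measurable_mink[OF sets[OF that]]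
        borel_measurable_cis_mink[OF sets[OF that]] by auto
    show "AE k in M j. norm (cis (mink x k)) \<le> 1"
      by simp
    show "AE k in M j. 0 \<le> mink e k"
      using cone[OF that] by eventually_elim (rule e)
  qed
  show "F holomorphic_on {z. 0 < Im z}"
    unfolding F_def using conditions
    by (intro holomorphic_on_sum holomorphic_on_mult holomorphic_on_const
        holomorphic_on_fourier_laplace[where B=1]) auto
  show "continuous_on {z. 0 \<le> Im z} F"
    unfolding F_def using conditions
    by (intro continuous_on_sum continuous_on_mult continuous_on_const
        continuous_on_fourier_laplace[where B=1]) auto
qed

lemma fourier_combination_vanishing_translate:
  assumes finite: "\<And>j. j < n \<Longrightarrow> finite_measure (M j)"
    and sets: "\<And>j. j < n \<Longrightarrow> sets (M j) = sets borel"
    and cone: "\<And>j. j < n \<Longrightarrow> AE k in M j. k \<in> future_cone"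
    and e: "\<And>k. k \<in> future_cone \<Longrightarrow> 0 \<le> mink e k"
    and zero: "\<And>y. y \<in> ball z \<rho> \<Longrightarrow> fourier_combination n c M y = 0"
    and w: "w \<in> ball (z + t *\<^sub>R e) \<rho>"
  shows "fourier_combination n c M w = 0"
proof -
  define w' where "w' = w - t *\<^sub>R e"
  have "\<exists>F. F holomorphic_on {z. 0 < Im z} \<and> continuous_on {z. 0 \<le> Im z} F \<and>
           (\<forall>s. F (of_real s) = fourier_combination n c M (w' + s *\<^sub>R e))"
    by (rule fourier_combination_holomorphic_extension) (use finite sets cone e in auto)
  then obtain F where holo: "F holomorphic_on {z. 0 < Im z}" and cont: "continuous_on {z. 0 \<le> Im z} F"
    and F_of_real: "\<And>s. F (of_real s) = fourier_combination n c M (w' + s *\<^sub>R e)"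
    by blast
  have "dist z w' < \<rho>"
    using w by (simp add: w'_def dist_norm algebra_simps)
  have "0 < norm e + 1"
    by (simp add: add_nonneg_pos)
  define d where "d = (\<rho> - dist z w') / (norm e + 1)"
  have "0 < d"
    using \<open>dist z w' < \<rho>\<close> \<open>0 < norm e + 1\<close> by (simp add: d_def)
  have F_zero: "F (of_real s) = 0" if "\<bar>s\<bar> < d" for s
  proof -
    have "dist z (w' + s *\<^sub>R e) \<le> dist z w' + \<bar>s\<bar> * norm e"
      using dist_triangle[of z "w' + s *\<^sub>R e" w'] by (simp add: dist_norm)
    also have "\<dots> \<le> dist z w' + \<bar>s\<bar> * (norm e + 1)"
      by (simp add: mult_left_mono)
    also have "\<dots> < dist z w' + d * (norm e + 1)"
      using that \<open>0 < norm e + 1\<close> by (intro add_strict_left_mono mult_strict_right_mono)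
    also have "\<dots> = \<rho>"
      using \<open>0 < norm e + 1\<close> by (simp add: d_def)
    finally show ?thesis
      using F_of_real zero by simp
  qed
  have "F (of_real t) = 0"
    using zero_on_closed_upper_half_plane_if_zero_on_real_interval[OF holo cont \<open>0 < d\<close> F_zero] by simp
  moreover have "w' + t *\<^sub>R e = w"
    by (simp add: w'_def)
  ultimately show ?thesis
    using F_of_real[of t] by simp
qed

lemma fourier_combination_vanishing_near_0:
  assumes "\<And>j. j < n \<Longrightarrow> finite_measure (M j)"
    and "\<And>j. j < n \<Longrightarrow> sets (M j) = sets borel"
    and "\<And>j. j < n \<Longrightarrow> AE k in M j. k \<in> future_cone"
    and "0 < r" and zero: "\<And>y. y \<in> ball 0 r \<Longrightarrow> fourier_combination n c M y = 0"
  shows "fourier_combination n c M x = 0"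
proof -
  let ?G = "fourier_combination n c M"
  have translate: "\<And>y. y \<in> ball (z + t *\<^sub>R cone_direction j) r \<Longrightarrow> ?G y = 0"
    if "\<And>y. y \<in> ball z r \<Longrightarrow> ?G y = 0" for z t j
    using assms(1-3) mink_cone_direction_nonneg that
    by (rule fourier_combination_vanishing_translate)
  define t0 where "t0 = x$0 - 2 * x$1 - 2 * x$2 - 2 * x$3"
  have "\<And>y. y \<in> ball (0 + t0 *\<^sub>R cone_direction 0) r \<Longrightarrow> ?G y = 0"
    using zero by (rule translate)
  then have "\<And>y. y \<in> ball (0 + t0 *\<^sub>R cone_direction 0 + (2 * x$1) *\<^sub>R cone_direction 1) r
      \<Longrightarrow> ?G y = 0"
    by (rule translate)
  then have "\<And>y. y \<in> ball (0 + t0 *\<^sub>R cone_direction 0 + (2 * x$1) *\<^sub>R cone_direction 1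
      + (2 * x$2) *\<^sub>R cone_direction 2) r \<Longrightarrow> ?G y = 0"
    by (rule translate)
  then have "\<And>y. y \<in> ball (0 + t0 *\<^sub>R cone_direction 0 + (2 * x$1) *\<^sub>R cone_direction 1
      + (2 * x$2) *\<^sub>R cone_direction 2 + (2 * x$3) *\<^sub>R cone_direction 3) r \<Longrightarrow> ?G y = 0"
    by (rule translate)
  moreover have "0 + t0 *\<^sub>R cone_direction 0 + (2 * x$1) *\<^sub>R cone_direction 1
      + (2 * x$2) *\<^sub>R cone_direction 2 + (2 * x$3) *\<^sub>R cone_direction 3 = x"
    unfolding t0_def add_0_left by (rule cone_direction_decomposition[symmetric])
  ultimately show ?thesis
    using \<open>0 < r\<close> by simp
qed

section \<open>Operators on \<open>l2\<close>\<close>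

definition l2_comb :: "complex \<Rightarrow> ('i \<Rightarrow> complex) \<Rightarrow> complex \<Rightarrow> ('i \<Rightarrow> complex) \<Rightarrow> 'i \<Rightarrow> complex" where
  "l2_comb a \<phi> b \<psi> = (\<lambda>i. a * \<phi> i + b * \<psi> i)"

lemma l2_inner_summable:
  fixes \<phi> \<psi> :: "'i::countable \<Rightarrow> complex"
  assumes "\<phi> \<in> l2" "\<psi> \<in> l2"
  shows "(\<lambda>i. cnj (\<phi> i) * \<psi> i) summable_on UNIV"
proof -
  have "Infinite_Sum.abs_summable_on (\<lambda>i. cnj (\<phi> i) * \<psi> i) UNIV"
  proof (rule Infinite_Sum.abs_summable_on_comparison_test')
    show "(\<lambda>i. (cmod (\<phi> i))\<^sup>2 + (cmod (\<psi> i))\<^sup>2) summable_on UNIV"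
      using assms by (intro summable_on_add) (auto simp: l2_def)
    fix i
    have "2 * (cmod (\<phi> i) * cmod (\<psi> i)) \<le> (cmod (\<phi> i))\<^sup>2 + (cmod (\<psi> i))\<^sup>2"
      using sum_squares_bound[of "cmod (\<phi> i)" "cmod (\<psi> i)"] by (simp add: power2_eq_square algebra_simps)
    moreover have "0 \<le> cmod (\<phi> i) * cmod (\<psi> i)"
      by simp
    ultimately show "norm (cnj (\<phi> i) * \<psi> i) \<le> (cmod (\<phi> i))\<^sup>2 + (cmod (\<psi> i))\<^sup>2"
      unfolding norm_mult complex_mod_cnj by linarith
  qed
  then show ?thesis
    by (rule abs_summable_summable)
qed

lemma l2_comb_in_l2:
  fixes \<phi> \<psi> :: "'i::countable \<Rightarrow> complex"
  assumes "\<phi> \<in> l2" "\<psi> \<in> l2"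
  shows "l2_comb a \<phi> b \<psi> \<in> l2"
proof -
  have "(\<lambda>i. 2 * (cmod a)\<^sup>2 * (cmod (\<phi> i))\<^sup>2 + 2 * (cmod b)\<^sup>2 * (cmod (\<psi> i))\<^sup>2) summable_on UNIV"
    using assms by (intro summable_on_add summable_on_cmult_right) (auto simp: l2_def)
  moreover have "(cmod (l2_comb a \<phi> b \<psi> i))\<^sup>2
                   \<le> 2 * (cmod a)\<^sup>2 * (cmod (\<phi> i))\<^sup>2 + 2 * (cmod b)\<^sup>2 * (cmod (\<psi> i))\<^sup>2" for i
  proof -
    have "cmod (l2_comb a \<phi> b \<psi> i) \<le> cmod a * cmod (\<phi> i) + cmod b * cmod (\<psi> i)"
      unfolding l2_comb_def using norm_triangle_ineq[of "a * \<phi> i" "b * \<psi> i"] by (simp add: norm_mult)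
    then have "(cmod (l2_comb a \<phi> b \<psi> i))\<^sup>2 \<le> (cmod a * cmod (\<phi> i) + cmod b * cmod (\<psi> i))\<^sup>2"
      by (intro power_mono) auto
    also have "\<dots> \<le> 2 * (cmod a * cmod (\<phi> i))\<^sup>2 + 2 * (cmod b * cmod (\<psi> i))\<^sup>2"
      using zero_le_power2[of "cmod a * cmod (\<phi> i) - cmod b * cmod (\<psi> i)"]
      unfolding power2_eq_square by (simp add: algebra_simps)
    finally show ?thesis
      by (simp add: power_mult_distrib)
  qed
  ultimately show ?thesis
    unfolding l2_def mem_Collect_eq by (rule summable_on_comparison_test) auto
qed

lemma l2_inner_comb_right:
  fixes \<phi> \<psi> \<eta> :: "'i::countable \<Rightarrow> complex"
  assumes "\<phi> \<in> l2" "\<psi> \<in> l2" "\<eta> \<in> l2"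
  shows "l2_inner \<phi> (l2_comb a \<psi> b \<eta>) = a * l2_inner \<phi> \<psi> + b * l2_inner \<phi> \<eta>"
proof -
  have "l2_inner \<phi> (l2_comb a \<psi> b \<eta>) = (\<Sum>\<^sub>\<infinity>i. a * (cnj (\<phi> i) * \<psi> i) + b * (cnj (\<phi> i) * \<eta> i))"
    unfolding l2_inner_def l2_comb_def by (simp add: algebra_simps)
  also have "\<dots> = (\<Sum>\<^sub>\<infinity>i. a * (cnj (\<phi> i) * \<psi> i)) + (\<Sum>\<^sub>\<infinity>i. b * (cnj (\<phi> i) * \<eta> i))"
    using assms by (intro infsum_add summable_on_cmult_right l2_inner_summable)
  finally show ?thesis
    unfolding l2_inner_def by (simp add: infsum_cmult_right')
qed

lemma l2_inner_commute_cnj: "l2_inner \<phi> \<psi> = cnj (l2_inner \<psi> \<phi>)"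
  unfolding l2_inner_def infsum_cnj[symmetric] by (simp add: mult.commute)

lemma l2_inner_comb_left:
  fixes \<phi> \<psi> \<eta> :: "'i::countable \<Rightarrow> complex"
  assumes "\<phi> \<in> l2" "\<psi> \<in> l2" "\<eta> \<in> l2"
  shows "l2_inner (l2_comb a \<psi> b \<eta>) \<phi> = cnj a * l2_inner \<psi> \<phi> + cnj b * l2_inner \<eta> \<phi>"
proof -
  have "l2_inner (l2_comb a \<psi> b \<eta>) \<phi> = cnj (a * l2_inner \<phi> \<psi> + b * l2_inner \<phi> \<eta>)"
    by (subst l2_inner_commute_cnj) (simp add: l2_inner_comb_right[OF assms])
  also have "\<dots> = cnj a * l2_inner \<psi> \<phi> + cnj b * l2_inner \<eta> \<phi>"
    by (simp add: l2_inner_commute_cnj[of \<phi>])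
  finally show ?thesis .
qed

lemma l2_inner_self:
  fixes \<psi> :: "'i::countable \<Rightarrow> complex"
  assumes "\<psi> \<in> l2"
  shows "l2_inner \<psi> \<psi> = of_real (\<Sum>\<^sub>\<infinity>i. (cmod (\<psi> i))\<^sup>2)"
proof -
  have summable: "(\<lambda>i. (cmod (\<psi> i))\<^sup>2) summable_on UNIV"
    using assms by (simp add: l2_def)
  have "cnj (\<psi> i) * \<psi> i = of_real ((cmod (\<psi> i))\<^sup>2)" for i
    by (metis complex_norm_square mult.commute of_real_power)
  then have "l2_inner \<psi> \<psi> = (\<Sum>\<^sub>\<infinity>i. of_real ((cmod (\<psi> i))\<^sup>2))"
    by (simp add: l2_inner_def)
  also have "\<dots> = of_real (\<Sum>\<^sub>\<infinity>i. (cmod (\<psi> i))\<^sup>2)"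
    using summable summable_on_bounded_linear[OF bounded_linear_of_real summable]
    by (intro infsum_bounded_linear_strong[OF _ bounded_linear_of_real]) auto
  finally show ?thesis .
qed

lemma l2_inner_self_nonneg: "\<psi> \<in> l2 \<Longrightarrow> 0 \<le> l2_inner \<psi> \<psi>"
  by (simp add: l2_inner_self less_eq_complex_def infsum_nonneg)

lemma l2_inner_self_pos:
  fixes \<psi> :: "'i::countable \<Rightarrow> complex"
  assumes "\<psi> \<in> l2" "\<psi> \<noteq> (\<lambda>_. 0)"
  shows "0 < Re (l2_inner \<psi> \<psi>)"
proof -
  obtain j where "\<psi> j \<noteq> 0"
    using assms(2) by auto
  have "(cmod (\<psi> j))\<^sup>2 \<le> (\<Sum>\<^sub>\<infinity>i. (cmod (\<psi> i))\<^sup>2)"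
    using finite_sum_le_infsum[of "\<lambda>i. (cmod (\<psi> i))\<^sup>2" UNIV "{j}"] assms(1) by (simp add: l2_def)
  moreover have "0 < (cmod (\<psi> j))\<^sup>2"
    using \<open>\<psi> j \<noteq> 0\<close> by simp
  ultimately have "0 < (\<Sum>\<^sub>\<infinity>i. (cmod (\<psi> i))\<^sup>2)"
    by linarith
  then show ?thesis
    using l2_inner_self[OF assms(1)] by simp
qed

lemma bounded_op_in_l2: "bounded_op A \<Longrightarrow> \<psi> \<in> l2 \<Longrightarrow> A \<psi> \<in> l2"
  by (simp add: bounded_op_def)

lemma positive_op_bounded: "positive_op A \<Longrightarrow> bounded_op A"
  by (simp add: positive_op_def)

lemma bounded_op_comb:
  "bounded_op A \<Longrightarrow> \<phi> \<in> l2 \<Longrightarrow> \<psi> \<in> l2 \<Longrightarrow> A (l2_comb a \<phi> b \<psi>) = l2_comb a (A \<phi>) b (A \<psi>)"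
  unfolding bounded_op_def l2_comb_def by blast

lemma l2_inner_comb_op_comb:
  fixes A :: "'i::countable op"
  assumes A: "bounded_op A" and "\<phi> \<in> l2" "\<eta> \<in> l2"
  shows "l2_inner (l2_comb 1 \<phi> c \<eta>) (A (l2_comb 1 \<phi> c \<eta>)) =
     l2_inner \<phi> (A \<phi>) + c * l2_inner \<phi> (A \<eta>) + cnj c * l2_inner \<eta> (A \<phi>) + cnj c * c * l2_inner \<eta> (A \<eta>)"
proof -
  have "A \<phi> \<in> l2" "A \<eta> \<in> l2"
    using A assms by (auto intro: bounded_op_in_l2)
  then show ?thesis
    using assms
    by (simp add: bounded_op_comb l2_comb_in_l2 l2_inner_comb_left l2_inner_comb_right algebra_simps)
qed

lemma polarization:
  fixes A :: "'i::countable op"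
  assumes "bounded_op A" "\<phi> \<in> l2" "\<eta> \<in> l2"
  shows "l2_inner \<phi> (A \<eta>) =
    (\<Sum>j<4. cnj (\<i> ^ j) / 4 * l2_inner (l2_comb 1 \<phi> (\<i> ^ j) \<eta>) (A (l2_comb 1 \<phi> (\<i> ^ j) \<eta>)))"
  by (simp add: l2_inner_comb_op_comb[OF assms] eval_nat_numeral field_simps)

lemma l2_inner_adjoint_if_quadratic_forms_cnj:
  fixes A B :: "'i::countable op"
  assumes A: "bounded_op A" and B: "bounded_op B"
    and quadratic: "\<And>v. v \<in> l2 \<Longrightarrow> l2_inner v (A v) = cnj (l2_inner v (B v))"
    and l2: "\<phi> \<in> l2" "\<eta> \<in> l2"
  shows "l2_inner \<phi> (A \<eta>) = cnj (l2_inner \<eta> (B \<phi>))"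
proof -
  obtain pA a1 a2 qA where A_form:
    "\<And>c. l2_inner (l2_comb 1 \<phi> c \<eta>) (A (l2_comb 1 \<phi> c \<eta>)) = pA + c * a1 + cnj c * a2 + cnj c * c * qA"
    and a1: "a1 = l2_inner \<phi> (A \<eta>)"
    using l2_inner_comb_op_comb[OF A l2] by blast
  obtain pB b1 b2 qB where B_form:
    "\<And>c. l2_inner (l2_comb 1 \<phi> c \<eta>) (B (l2_comb 1 \<phi> c \<eta>)) = pB + c * b1 + cnj c * b2 + cnj c * c * qB"
    and b2: "b2 = l2_inner \<eta> (B \<phi>)"
    using l2_inner_comb_op_comb[OF B l2] by blast
  have "pA + c * a1 + cnj c * a2 + cnj c * c * qA = cnj (pB + c * b1 + cnj c * b2 + cnj c * c * qB)" for c
    using quadratic[OF l2_comb_in_l2[OF l2, of 1 c]] by (simp only: A_form B_form)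
  from this[of 0] this[of 1] this[of "-1"] this[of \<i>] have "a1 = cnj b2"
    by (auto simp: complex_eq_iff)
  then show ?thesis
    using a1 b2 by simp
qed

lemma positive_op_hermitian:
  fixes A :: "'i::countable op"
  assumes A: "positive_op A" and "\<phi> \<in> l2" "\<eta> \<in> l2"
  shows "l2_inner \<phi> (A \<eta>) = cnj (l2_inner \<eta> (A \<phi>))"
proof (rule l2_inner_adjoint_if_quadratic_forms_cnj)
  show "l2_inner v (A v) = cnj (l2_inner v (A v))" if "v \<in> l2" for v
    using A that by (simp add: positive_op_def less_eq_complex_def complex_eq_iff)
qed (use assms positive_op_bounded in auto)

text \<open>If \<open>(\<phi>, A w) \<noteq> 0\<close>, then \<open>w + s \<phi>\<close> has negative expectation for a suitable small \<open>s\<close>.\<close>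
lemma positive_op_kernel:
  fixes A :: "'i::countable op"
  assumes A: "positive_op A" and w: "w \<in> l2" "l2_inner w (A w) = 0" and \<phi>: "\<phi> \<in> l2"
  shows "l2_inner \<phi> (A w) = 0"
proof -
  define a where "a = l2_inner \<phi> (A w)"
  define P where "P = l2_inner \<phi> (A \<phi>)"
  have "0 \<le> Re P"
    using A \<phi> by (auto simp: positive_op_def P_def less_eq_complex_def)
  define t where "t = 1 / (Re P + 1)"
  have "0 < t" "t * Re P < 1"
    using \<open>0 \<le> Re P\<close> by (auto simp: t_def field_simps)
  define s where "s = - of_real t * a"
  define v where "v = l2_comb 1 w s \<phi>"
  have "l2_inner v (A v) = s * cnj a + cnj s * a + cnj s * s * P"
    using l2_inner_comb_op_comb[OF positive_op_bounded[OF A] w(1) \<phi>, of s]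
      positive_op_hermitian[OF A w(1) \<phi>] w(2)
    by (simp add: v_def a_def P_def)
  also have "\<dots> = of_real t * (a * cnj a) * (of_real t * P - 2)"
    by (simp add: s_def algebra_simps)
  also have "\<dots> = of_real (t * (cmod a)\<^sup>2) * (of_real t * P - 2)"
    by (simp only: complex_norm_square[symmetric] of_real_mult)
  finally have "Re (l2_inner v (A v)) = t * (cmod a)\<^sup>2 * (t * Re P - 2)"
    by simp
  moreover have "0 \<le> Re (l2_inner v (A v))"
    using A l2_comb_in_l2[OF w(1) \<phi>] by (auto simp: v_def positive_op_def less_eq_complex_def)
  ultimately have "(cmod a)\<^sup>2 * (t * (2 - t * Re P)) \<le> 0"
    by (simp add: algebra_simps)
  then have "(cmod a)\<^sup>2 \<le> 0"
    using \<open>0 < t\<close> \<open>t * Re P < 1\<close> by (auto simp: mult_le_0_iff)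
  then show ?thesis
    by (simp add: a_def)
qed

section \<open>Scalar measures of operator valued measures\<close>

lemma weakly_countably_additiveD:
  "weakly_countably_additive T \<Longrightarrow> (\<And>n. I n \<in> sets borel) \<Longrightarrow> disjoint_family I \<Longrightarrow>
    \<phi> \<in> l2 \<Longrightarrow> \<psi> \<in> l2 \<Longrightarrow> (\<lambda>n. l2_inner \<phi> (T (I n) \<psi>)) sums l2_inner \<phi> (T (\<Union>n. I n) \<psi>)"
  unfolding weakly_countably_additive_def by blast

lemma weakly_countably_additive_empty:
  fixes T :: "spacetime set \<Rightarrow> 'i::countable op"
  assumes "weakly_countably_additive T" "\<phi> \<in> l2" "\<psi> \<in> l2"
  shows "l2_inner \<phi> (T {} \<psi>) = 0"
proof -
  have "(\<lambda>n::nat. l2_inner \<phi> (T {} \<psi>)) sums l2_inner \<phi> (T {} \<psi>)"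
    using weakly_countably_additiveD[OF assms(1), of "\<lambda>_. {}"] assms(2,3)
    by (simp add: disjoint_family_on_def)
  then have "(\<lambda>n::nat. l2_inner \<phi> (T {} \<psi>)) \<longlonglongrightarrow> 0"
    by (intro summable_LIMSEQ_zero sums_summable)
  then show ?thesis
    using LIMSEQ_unique[OF tendsto_const] by blast
qed

lemma sets_spectral_measure [simp]: "sets (spectral_measure T \<psi>) = sets borel"
  unfolding spectral_measure_def
  by (rule sigma_algebra.sets_measure_of_eq) (use sets.sigma_algebra_axioms[of borel] in simp)

lemma space_spectral_measure [simp]: "space (spectral_measure T \<psi>) = UNIV"
  unfolding spectral_measure_def by (rule space_measure_of_conv)

lemma emeasure_spectral_measure:
  fixes T :: "spacetime set \<Rightarrow> 'i::countable op"
  assumes T: "weakly_countably_additive T" and \<psi>: "\<psi> \<in> l2"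
    and nonneg: "\<And>B. B \<in> sets borel \<Longrightarrow> 0 \<le> l2_inner \<psi> (T B \<psi>)"
    and "B \<in> sets borel"
  shows "emeasure (spectral_measure T \<psi>) B = ennreal (Re (l2_inner \<psi> (T B \<psi>)))"
  unfolding spectral_measure_def
proof (rule emeasure_measure_of_sigma[OF _ _ _ \<open>B \<in> sets borel\<close>])
  show "sigma_algebra UNIV (sets borel)"
    using sets.sigma_algebra_axioms[of borel] by simp
  show "positive (sets borel) (\<lambda>B. ennreal (Re (l2_inner \<psi> (T B \<psi>))))"
    unfolding positive_def using weakly_countably_additive_empty[OF T \<psi> \<psi>] by simp
  show "countably_additive (sets borel) (\<lambda>B. ennreal (Re (l2_inner \<psi> (T B \<psi>))))"
    unfolding countably_additive_def
  proof (intro allI impI)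
    fix A :: "nat \<Rightarrow> spacetime set"
    assume A: "range A \<subseteq> sets borel" "disjoint_family A" "\<Union> (range A) \<in> sets borel"
    then have "(\<lambda>n. l2_inner \<psi> (T (A n) \<psi>)) sums l2_inner \<psi> (T (\<Union>n. A n) \<psi>)"
      using weakly_countably_additiveD[OF T _ _ \<psi> \<psi>] by blast
    then have sums: "(\<lambda>n. Re (l2_inner \<psi> (T (A n) \<psi>))) sums Re (l2_inner \<psi> (T (\<Union>n. A n) \<psi>))"
      by (rule sums_Re)
    have terms_nonneg: "0 \<le> Re (l2_inner \<psi> (T (A n) \<psi>))" for n
      using nonneg A by (auto simp: less_eq_complex_def)
    show "(\<Sum>n. ennreal (Re (l2_inner \<psi> (T (A n) \<psi>))))
                       = ennreal (Re (l2_inner \<psi> (T (\<Union> (range A)) \<psi>)))"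
      using suminf_ennreal2[OF terms_nonneg sums_summable[OF sums]] sums_unique[OF sums] by simp
  qed
qed

lemma finite_measure_spectral_measure:
  fixes T :: "spacetime set \<Rightarrow> 'i::countable op"
  assumes "weakly_countably_additive T" "\<psi> \<in> l2" "\<And>B. B \<in> sets borel \<Longrightarrow> 0 \<le> l2_inner \<psi> (T B \<psi>)"
  shows "finite_measure (spectral_measure T \<psi>)"
  by (rule finite_measureI) (simp add: emeasure_spectral_measure[OF assms])

lemma PV_measure_expectation_nonneg:
  fixes E :: "spacetime set \<Rightarrow> 'i::countable op"
  assumes E: "PV_measure E" and "B \<in> sets borel" and \<psi>: "\<psi> \<in> l2"
  shows "0 \<le> l2_inner \<psi> (E B \<psi>)"
proof -
  have "E B \<psi> \<in> l2" and "E B (E B \<psi>) = E B \<psi>"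
    and "\<And>\<phi> \<eta>. \<phi> \<in> l2 \<Longrightarrow> \<eta> \<in> l2 \<Longrightarrow> l2_inner \<phi> (E B \<eta>) = l2_inner (E B \<phi>) \<eta>"
    using assms unfolding PV_measure_def by (auto intro: bounded_op_in_l2)
  then have "l2_inner \<psi> (E B \<psi>) = l2_inner (E B \<psi>) (E B \<psi>)"
    using \<psi> by simp
  then show ?thesis
    using l2_inner_self_nonneg[OF \<open>E B \<psi> \<in> l2\<close>] by simp
qed

lemma closed_future_cone: "closed future_cone"
  unfolding future_cone_def mink_def
  by (intro closed_Collect_conj closed_Collect_le continuous_intros)

lemma UNIV_emeasure_zero_if_balls_null:
  fixes M :: "'a::{metric_space,second_countable_topology} measure"
  assumes "0 < r" and null: "\<And>c. ball c r \<in> null_sets M"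
  shows "emeasure M UNIV = 0"
proof -
  obtain D :: "'a set" where "countable D" and dense: "\<And>X. open X \<Longrightarrow> X \<noteq> {} \<Longrightarrow> \<exists>d\<in>D. d \<in> X"
    by (rule countable_dense_setE) blast
  have "UNIV = (\<Union>d\<in>D. ball d r)"
    using dense[of "ball _ r"] \<open>0 < r\<close> by (auto simp: dist_commute)
  then have "UNIV \<in> null_sets M"
    using null_sets_UN'[OF \<open>countable D\<close>, of "\<lambda>d. ball d r"] null by simp
  then show ?thesis
    by auto
qed

section \<open>Translations and covariant POV measures\<close>

locale four_momentum =
  fixes E :: "spacetime set \<Rightarrow> 'i::countable op" and U :: "spacetime \<Rightarrow> 'i op"
  assumes four_momentum_translations: "four_momentum_translations E U"
begin

lemma translation_bounded: "bounded_op (U x)"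
  using four_momentum_translations by (simp add: four_momentum_translations_def)

lemma translation_expectation: "\<psi> \<in> l2 \<Longrightarrow> l2_inner \<psi> (U x \<psi>) = (\<integral>k. cis (mink x k) \<partial>spectral_measure E \<psi>)"
  using four_momentum_translations by (simp add: four_momentum_translations_def)

lemma
  assumes "\<psi> \<in> l2"
  shows finite_measure_momentum_spectral_measure: "finite_measure (spectral_measure E \<psi>)"
    and AE_momentum_in_future_cone: "AE k in spectral_measure E \<psi>. k \<in> future_cone"
proof -
  have E: "PV_measure E" and "E future_cone \<psi> = \<psi>"
    using four_momentum_translations assms by (auto simp: four_momentum_translations_def)
  have additive: "weakly_countably_additive E" and "E UNIV \<psi> = \<psi>"
    using E assms by (auto simp: PV_measure_def)
  have nonneg: "\<And>B. B \<in> sets borel \<Longrightarrow> 0 \<le> l2_inner \<psi> (E B \<psi>)"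
    using PV_measure_expectation_nonneg[OF E _ assms] .
  then show "finite_measure (spectral_measure E \<psi>)"
    by (rule finite_measure_spectral_measure[OF additive assms])
  let ?M = "spectral_measure E \<psi>"
  have cone: "future_cone \<in> sets borel"
    using closed_future_cone by simp
  have "emeasure ?M future_cone + emeasure ?M (- future_cone) = emeasure ?M UNIV"
    using cone by (subst plus_emeasure) auto
  also have "\<dots> = emeasure ?M future_cone + 0"
    using emeasure_spectral_measure[OF additive assms nonneg] cone
      \<open>E UNIV \<psi> = \<psi>\<close> \<open>E future_cone \<psi> = \<psi>\<close> by simp
  finally have "emeasure ?M (- future_cone) = 0"
    using emeasure_spectral_measure[OF additive assms nonneg cone] ennreal_add_left_cancel by auto
  then show "AE k in ?M. k \<in> future_cone"
    using cone by (intro AE_I'[of "- future_cone"]) auto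
qed

lemma translation_adjoint:
  assumes "\<phi> \<in> l2" "\<eta> \<in> l2"
  shows "l2_inner \<phi> (U x \<eta>) = cnj (l2_inner \<eta> (U (- x) \<phi>))"
proof (rule l2_inner_adjoint_if_quadratic_forms_cnj[OF translation_bounded translation_bounded _ assms])
  fix v :: "'i \<Rightarrow> complex"
  assume "v \<in> l2"
  have "mink (- x) k = - mink x k" for k
    by (simp add: mink_def)
  then have "l2_inner v (U (- x) v) = (\<integral>k. cnj (cis (mink x k)) \<partial>spectral_measure E v)"
    by (simp add: translation_expectation[OF \<open>v \<in> l2\<close>] cis_cnj)
  also have "\<dots> = cnj (l2_inner v (U x v))"
    unfolding translation_expectation[OF \<open>v \<in> l2\<close>] by (rule Bochner_Integration.integral_cnj)
  finally show "l2_inner v (U x v) = cnj (l2_inner v (U (- x) v))"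
    by simp
qed

lemma translation_matrix_element:
  assumes "\<eta> \<in> l2" "\<psi> \<in> l2"
  shows "l2_inner \<eta> (U y \<psi>) = fourier_combination 4 (\<lambda>j. cnj (\<i> ^ j) / 4)
           (\<lambda>j. spectral_measure E (l2_comb 1 \<eta> (\<i> ^ j) \<psi>)) y"
  unfolding polarization[OF translation_bounded assms] fourier_combination_def
  using translation_expectation[OF l2_comb_in_l2[OF assms]] by simp

lemma matrix_element_vanishing_near_0:
  assumes "\<eta> \<in> l2" "\<psi> \<in> l2" "0 < r" and zero: "\<And>y. norm y < r \<Longrightarrow> l2_inner \<eta> (U y \<psi>) = 0"
  shows "l2_inner \<eta> (U y \<psi>) = 0"
  unfolding translation_matrix_element[OF assms(1,2)]
proof (rule fourier_combination_vanishing_near_0[OF _ _ _ \<open>0 < r\<close>])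
  show "fourier_combination 4 (\<lambda>j. cnj (\<i> ^ j) / 4) (\<lambda>j. spectral_measure E (l2_comb 1 \<eta> (\<i> ^ j) \<psi>)) z = 0"
    if "z \<in> ball 0 r" for z
    using zero[of z] that translation_matrix_element[OF assms(1,2)] by simp
qed (use l2_comb_in_l2[OF assms(1,2)] finite_measure_momentum_spectral_measure
       AE_momentum_in_future_cone in auto)

end

locale covariant_POV_measure = four_momentum E U for E :: "spacetime set \<Rightarrow> 'i::countable op" and U +
  fixes \<tau> :: "spacetime set \<Rightarrow> 'i op"
  assumes POV: "POV_measure \<tau>"
    and covariant: "\<forall>I\<in>sets borel. \<forall>x. \<forall>\<psi>\<in>l2. U (- x) (\<tau> ((\<lambda>y. y + x) ` I) (U x \<psi>)) = \<tau> I \<psi>"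
begin

lemma POV_positive: "B \<in> sets borel \<Longrightarrow> positive_op (\<tau> B)"
  using POV by (simp add: POV_measure_def)

lemma expectation_nonneg: "B \<in> sets borel \<Longrightarrow> \<psi> \<in> l2 \<Longrightarrow> 0 \<le> l2_inner \<psi> (\<tau> B \<psi>)"
  using POV_positive by (simp add: positive_op_def)

lemma emeasure_POV_spectral_measure:
  "\<psi> \<in> l2 \<Longrightarrow> B \<in> sets borel \<Longrightarrow>
    emeasure (spectral_measure \<tau> \<psi>) B = ennreal (Re (l2_inner \<psi> (\<tau> B \<psi>)))"
  using POV expectation_nonneg by (intro emeasure_spectral_measure) (auto simp: POV_measure_def)

lemma expectation_eq_0_mono:
  assumes "\<psi> \<in> l2" "S \<in> sets borel" "T \<in> sets borel" "S \<subseteq> T" "l2_inner \<psi> (\<tau> T \<psi>) = 0"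
  shows "l2_inner \<psi> (\<tau> S \<psi>) = 0"
proof -
  have "emeasure (spectral_measure \<tau> \<psi>) S \<le> emeasure (spectral_measure \<tau> \<psi>) T"
    using assms by (intro emeasure_mono) auto
  then have "Re (l2_inner \<psi> (\<tau> S \<psi>)) \<le> 0"
    using assms by (simp add: emeasure_POV_spectral_measure ennreal_eq_0_iff)
  then show ?thesis
    using expectation_nonneg[OF assms(2,1)] by (simp add: less_eq_complex_def complex_eq_iff)
qed

lemma expectation_translated_ball:
  assumes "\<psi> \<in> l2"
  shows "l2_inner \<psi> (\<tau> (ball (c + x) r) \<psi>) = l2_inner (U (- x) \<psi>) (\<tau> (ball c r) (U (- x) \<psi>))"
proof -
  have "(\<lambda>y. y + - x) ` ball (c + x) r = ball c r"
    using ball_translation_subtract[of "c + x" x r] by simp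
  then have "\<tau> (ball (c + x) r) \<psi> = U x (\<tau> (ball c r) (U (- x) \<psi>))"
    using covariant[rule_format, where I="ball (c + x) r" and x="- x" and \<psi>=\<psi>] assms by simp
  moreover have "\<tau> (ball c r) (U (- x) \<psi>) \<in> l2"
    using assms by (simp add: bounded_op_in_l2 translation_bounded positive_op_bounded POV_positive)
  ultimately have "l2_inner \<psi> (\<tau> (ball (c + x) r) \<psi>)
      = cnj (l2_inner (\<tau> (ball c r) (U (- x) \<psi>)) (U (- x) \<psi>))"
    using translation_adjoint[OF assms, of _ x] by simp
  then show ?thesis
    by (simp flip: l2_inner_commute_cnj)
qed

text \<open>Positivity turns vanishing expectations into vanishing matrix elements, to which the spectrum
  condition applies.\<close>
lemma translated_expectation_vanishing:
  assumes \<psi>: "\<psi> \<in> l2" and B: "B \<in> sets borel" and "0 < r"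
    and zero: "\<And>x. norm x < r \<Longrightarrow> l2_inner (U x \<psi>) (\<tau> B (U x \<psi>)) = 0"
  shows "l2_inner (U x \<psi>) (\<tau> B (U x \<psi>)) = 0"
proof -
  have U_l2: "U y \<psi> \<in> l2" for y
    by (rule bounded_op_in_l2[OF translation_bounded \<psi>])
  have "l2_inner (\<tau> B \<phi>) (U y \<psi>) = 0" if "\<phi> \<in> l2" for \<phi> y
  proof (rule matrix_element_vanishing_near_0[OF _ \<psi> \<open>0 < r\<close>])
    show "\<tau> B \<phi> \<in> l2"
      by (rule bounded_op_in_l2[OF positive_op_bounded[OF POV_positive[OF B]] that])
    show "l2_inner (\<tau> B \<phi>) (U z \<psi>) = 0" if "norm z < r" for z
    proof -
      have "l2_inner (\<tau> B \<phi>) (U z \<psi>) = l2_inner \<phi> (\<tau> B (U z \<psi>))"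
        using positive_op_hermitian[OF POV_positive[OF B] U_l2 \<open>\<phi> \<in> l2\<close>]
          l2_inner_commute_cnj[of "\<tau> B \<phi>"] by simp
      also have "\<dots> = 0"
        using positive_op_kernel[OF POV_positive[OF B] U_l2 zero[OF that] \<open>\<phi> \<in> l2\<close>] .
      finally show ?thesis .
    qed
  qed
  then show ?thesis
    using l2_inner_commute_cnj[of "U x \<psi>"] U_l2 by simp
qed

lemma expectation_zero_imp_balls_zero:
  assumes \<psi>: "\<psi> \<in> l2" and "0 < r" and I: "I \<in> sets borel" "ball a (2 * r) \<subseteq> I"
    and I_zero: "l2_inner \<psi> (\<tau> I \<psi>) = 0"
  shows "l2_inner \<psi> (\<tau> (ball d r) \<psi>) = 0"
proof -
  have near_0: "l2_inner (U x \<psi>) (\<tau> (ball a r) (U x \<psi>)) = 0" if "norm x < r" for x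
  proof -
    have "ball (a - x) r \<subseteq> ball a (2 * r)"
    proof
      fix y
      assume "y \<in> ball (a - x) r"
      then have "dist a y \<le> norm x + dist (a - x) y"
        using dist_triangle[of a y "a - x"] by (simp add: dist_norm)
      then show "y \<in> ball a (2 * r)"
        using that \<open>y \<in> ball (a - x) r\<close> by simp
    qed
    then have "l2_inner \<psi> (\<tau> (ball (a - x) r) \<psi>) = 0"
      using I by (intro expectation_eq_0_mono[OF \<psi> _ _ _ I_zero]) auto
    then show ?thesis
      using expectation_translated_ball[OF \<psi>, of a "- x" r] by simp
  qed
  have "l2_inner (U x \<psi>) (\<tau> (ball a r) (U x \<psi>)) = 0" for x
    using translated_expectation_vanishing[OF \<psi> borel_open[OF open_ball] \<open>0 < r\<close> near_0] .
  then show ?thesis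
    using expectation_translated_ball[OF \<psi>, of a "d - a" r] by simp
qed

lemma expectation_pos:
  assumes "normalized \<tau>" and \<psi>: "\<psi> \<in> l2" "\<psi> \<noteq> (\<lambda>_. 0)" and I: "open I" "I \<noteq> {}"
  shows "0 < l2_inner \<psi> (\<tau> I \<psi>)"
proof (rule ccontr)
  assume "\<not> 0 < l2_inner \<psi> (\<tau> I \<psi>)"
  then have I_zero: "l2_inner \<psi> (\<tau> I \<psi>) = 0"
    using expectation_nonneg[of I \<psi>] I \<psi> by (simp add: order_less_le)
  obtain a where "a \<in> I"
    using I by blast
  then obtain \<epsilon> where "0 < \<epsilon>" "ball a \<epsilon> \<subseteq> I"
    using I open_contains_ball_eq by blast
  then have "ball d (\<epsilon> / 2) \<in> null_sets (spectral_measure \<tau> \<psi>)" for d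
    using expectation_zero_imp_balls_zero[OF \<psi>(1), of "\<epsilon> / 2" I a d] I_zero I(1)
      emeasure_POV_spectral_measure[OF \<psi>(1), of "ball d (\<epsilon> / 2)"] by (simp add: null_setsI)
  then have "emeasure (spectral_measure \<tau> \<psi>) UNIV = 0"
    using \<open>0 < \<epsilon>\<close> by (intro UNIV_emeasure_zero_if_balls_null[of "\<epsilon> / 2"]) auto
  moreover have "emeasure (spectral_measure \<tau> \<psi>) UNIV = ennreal (Re (l2_inner \<psi> \<psi>))"
    using \<open>normalized \<tau>\<close> \<psi> by (simp add: emeasure_POV_spectral_measure normalized_def)
  ultimately show False
    using l2_inner_self_pos[OF \<psi>] by simp
qed

end

theorem proposition1:
  fixes E :: "spacetime set \<Rightarrow> 'i::countable op"
    and U :: "spacetime \<Rightarrow> 'i op"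
    and \<tau> :: "spacetime set \<Rightarrow> 'i op"
  assumes P: "four_momentum_translations E U"
    and pov: "POV_measure \<tau>"
    and norm: "normalized \<tau>"
    and cov: "\<forall>I\<in>sets borel. \<forall>x. \<forall>\<psi>\<in>l2.
               U (- x) (\<tau> ((\<lambda>y. y + x) ` I) (U x \<psi>)) = \<tau> I \<psi>"
  shows "\<forall>\<psi>\<in>l2. \<psi> \<noteq> (\<lambda>_. 0) \<longrightarrow> (\<forall>I. open I \<and> I \<noteq> {} \<longrightarrow> l2_inner \<psi> (\<tau> I \<psi>) > 0)"
proof -
  interpret covariant_POV_measure E U \<tau>
    using P pov cov by unfold_locales
  show ?thesis
    using expectation_pos[OF norm] by blast
qed

end
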